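(* Let $(X,Y)$ be random variables on finite sets $\mathcal{X},\mathcal{Y}$ with joint pmf $P_{XY}$, and let $(X^n,Y^n)$ consist of $n$ independent copies of $(X,Y)$. Then for every $0<\epsilon<1$, \[ R^*_\epsilon(X,Y):=\lim_{n\to\infty}\frac1nL_\epsilon(X^n,Y^n)=H(X\triangle Y)=H(X|Y)+H(Y|X). \]
   Context: Setting of the protocol. Party 1 observes $X^n$ and party 2 observes $Y^n$. They may use mutually independent private randomness $U_{\mathcal X}$, $U_{\mathcal Y}$ and shared randomness $U$, all independent of the observations. Tree protocol. A tree protocol is a binary tree whose internal vertices are labelled 1 or 2. At a vertex labelled $i$, party $i$ sends a bit that is a function of its observation, its private randomness and $U$. The protocol moves to the corresponding child and stops at a leaf. The transcript is $\Pi$, and the length is the depth of the tree. Data exchange. A protocol attains $\epsilon$-data exchange if party 1 can produce $\hat Y$ from (its observation, $\Pi$, $U_{\mathcal X}$, $U$) and party 2 can produce $\hat X$ from (its observation, $\Pi$, $U_{\mathcal Y}$, $U$), with $\Pr(\hat X=X^n,\hat Y=Y^n)\ge1-\epsilon$. $L_\epsilon(X^n,Y^n)$ is the infimum of the lengths of such protocols. *)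

theory Defs
  imports "HOL-Probability.Probability"
begin

definition marg_X :: "('x \<times> 'y) pmf \<Rightarrow> 'x \<Rightarrow> real" where
  "marg_X P x = (\<Sum>y\<in>UNIV. pmf P (x, y))"

definition marg_Y :: "('x \<times> 'y) pmf \<Rightarrow> 'y \<Rightarrow> real" where
  "marg_Y P y = (\<Sum>x\<in>UNIV. pmf P (x, y))"

definition cond_entropy_XY :: "('x::finite \<times> 'y::finite) pmf \<Rightarrow> real" where
  "cond_entropy_XY P = (\<Sum>x\<in>UNIV. \<Sum>y\<in>UNIV.
      if pmf P (x, y) = 0 then 0
      else - pmf P (x, y) * log 2 (pmf P (x, y) / marg_Y P y))"

definition cond_entropy_YX :: "('x::finite \<times> 'y::finite) pmf \<Rightarrow> real" where
  "cond_entropy_YX P = (\<Sum>x\<in>UNIV. \<Sum>y\<in>UNIV.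
      if pmf P (x, y) = 0 then 0
      else - pmf P (x, y) * log 2 (pmf P (x, y) / marg_X P x))"

fun iid_pmf :: "nat \<Rightarrow> 'a pmf \<Rightarrow> 'a list pmf" where
  "iid_pmf 0 p = return_pmf []"
| "iid_pmf (Suc n) p = do { x \<leftarrow> p; xs \<leftarrow> iid_pmf n p; return_pmf (x # xs) }"

text \<open>A binary tree; an internal vertex labelled 1 (resp. 2) carries the bit function of
party 1 (resp. 2) applied to its local information (observation, private randomness,
shared randomness). Left child = bit False, right child = bit True.\<close>
datatype ('a, 'b) ptree =
    Leaf
  | Node1 "'a \<Rightarrow> bool" "('a, 'b) ptree" "('a, 'b) ptree"
  | Node2 "'b \<Rightarrow> bool" "('a, 'b) ptree" "('a, 'b) ptree"

fun depth :: "('a, 'b) ptree \<Rightarrow> nat" where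
  "depth Leaf = 0"
| "depth (Node1 f l r) = Suc (max (depth l) (depth r))"
| "depth (Node2 f l r) = Suc (max (depth l) (depth r))"

fun transcript :: "('a, 'b) ptree \<Rightarrow> 'a \<Rightarrow> 'b \<Rightarrow> bool list" where
  "transcript Leaf a b = []"
| "transcript (Node1 f l r) a b = f a # transcript (if f a then r else l) a b"
| "transcript (Node2 f l r) a b = f b # transcript (if f b then r else l) a b"

text \<open>Randomness: U_X, U_Y, U are independent, with arbitrary discrete distributions
(values in nat), independent of the observations. Local information of party 1 is
(X^n, U_X, U), of party 2 is (Y^n, U_Y, U).\<close>

type_synonym ('x, 'y) protocol = "('x list \<times> nat \<times> nat, 'y list \<times> nat \<times> nat) ptree"

definition success_prob ::
  "('x \<times> 'y) pmf \<Rightarrow> nat \<Rightarrow> nat pmf \<Rightarrow> nat pmf \<Rightarrow> nat pmf \<Rightarrow> ('x, 'y) protocol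
   \<Rightarrow> ('x list \<Rightarrow> bool list \<Rightarrow> nat \<Rightarrow> nat \<Rightarrow> 'y list)
   \<Rightarrow> ('y list \<Rightarrow> bool list \<Rightarrow> nat \<Rightarrow> nat \<Rightarrow> 'x list) \<Rightarrow> real" where
  "success_prob P n PUX PUY PU T dec1 dec2 =
     measure_pmf.prob
       (do { xys \<leftarrow> iid_pmf n P; ux \<leftarrow> PUX; uy \<leftarrow> PUY; u \<leftarrow> PU;
             return_pmf (xys, ux, uy, u) })
       {(xys, ux, uy, u).
          let xs = map fst xys; ys = map snd xys;
              tr = transcript T (xs, ux, u) (ys, uy, u)
          in dec1 xs tr ux u = ys \<and> dec2 ys tr uy u = xs}"

definition L_eps :: "('x \<times> 'y) pmf \<Rightarrow> real \<Rightarrow> nat \<Rightarrow> real" where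
  "L_eps P \<epsilon> n = real (Inf {depth T | T PUX PUY PU dec1 dec2.
        success_prob P n PUX PUY PU T dec1 dec2 \<ge> 1 - \<epsilon>})"

end

theory Submission
  imports Defs "HOL-Real_Asymp.Real_Asymp"
begin

text \<open>Typical sequences carry almost all the mass (Chebyshev's inequality for the information
  densities) and satisfy \<open>P(x^n, y^n) \<approx> 2^(-n H(Y|X)) P(x^n) \<approx> 2^(-n H(X|Y)) P(y^n)\<close>.

  Converse: for fixed randomness the transcript of a tree protocol is constant on combinatorial
  rectangles, and among the successfully exchanged typical pairs with a given transcript either
  observation determines the other. Bounding the mass of such a class once through \<open>P(x^n)\<close> and
  once through \<open>P(y^n)\<close>, and applying Cauchy--Schwarz over the at most \<open>2^(d+1)\<close> transcripts of a
  depth-\<open>d\<close> protocol, shows that success probability \<open>1 - \<epsilon>\<close> forces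
  \<open>d \<ge> n (H(X|Y) + H(Y|X) - 2\<delta>) - O(1)\<close>.

  Achievability: party 1 sends a hash of \<open>x^n\<close> with about \<open>n (H(X|Y) + 2\<delta>)\<close> bits, then party 2 a
  hash of \<open>y^n\<close> with about \<open>n (H(Y|X) + 2\<delta>)\<close> bits, and each decodes the other's sequence as the
  conditionally typical candidate with the received hash. There are at most \<open>2^(n (H + \<delta>))\<close>
  candidates, so a uniformly random hash causes a collision with probability at most \<open>2^(-n\<delta>)\<close>,
  and some fixed hash does no worse.\<close>

definition lists_len :: "nat \<Rightarrow> 'a list set" where
  "lists_len n = {xs. length xs = n}"

lemma finite_lists_len [simp]: "finite (lists_len n :: 'a::finite list set)"
  using finite_lists_length_eq[of "UNIV :: 'a set" n] by (simp add: lists_len_def)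

lemma lists_len_0 [simp]: "lists_len 0 = {[]}"
  by (auto simp: lists_len_def)

lemma card_bool_lists_len: "card (lists_len k :: bool list set) = 2 ^ k"
  using card_lists_length_eq[of "UNIV :: bool set" k] by (simp add: lists_len_def)

lemma sum_lists_len_Suc:
  fixes F :: "'a::finite list \<Rightarrow> 'b::comm_monoid_add"
  shows "(\<Sum>zs\<in>lists_len (Suc n). F zs) = (\<Sum>z\<in>UNIV. \<Sum>zs\<in>lists_len n. F (z # zs))"
proof -
  have eq: "lists_len (Suc n) = (\<lambda>(z, zs). z # zs) ` (UNIV \<times> lists_len n)"
    by (auto simp: lists_len_def length_Suc_conv)
  have inj: "inj_on (\<lambda>(z, zs). z # zs) (UNIV \<times> lists_len n)"
    by (auto simp: inj_on_def)
  show ?thesis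
    unfolding eq sum.reindex[OF inj] by (simp add: sum.cartesian_product case_prod_unfold)
qed

lemma sum_prod_list_lists_len:
  fixes w :: "'a::finite \<Rightarrow> real"
  shows "(\<Sum>xs\<in>lists_len n. prod_list (map w xs)) = (\<Sum>a\<in>UNIV. w a) ^ n"
  by (induction n) (simp_all add: sum_lists_len_Suc flip: sum_distrib_left sum_distrib_right)

lemma sum_prod_list_zip_left:
  fixes F :: "'a::finite \<times> 'b \<Rightarrow> real"
  shows "(\<Sum>xs\<in>lists_len (length ys). prod_list (map F (zip xs ys)))
       = prod_list (map (\<lambda>b. \<Sum>a\<in>UNIV. F (a, b)) ys)"
  by (induction ys) (simp_all add: sum_lists_len_Suc flip: sum_distrib_left sum_distrib_right)

lemma sum_prod_list_zip_right:
  fixes F :: "'a \<times> 'b::finite \<Rightarrow> real"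
  shows "(\<Sum>ys\<in>lists_len (length xs). prod_list (map F (zip xs ys)))
       = prod_list (map (\<lambda>a. \<Sum>b\<in>UNIV. F (a, b)) xs)"
  by (induction xs) (simp_all add: sum_lists_len_Suc flip: sum_distrib_left sum_distrib_right)

lemma prod_list_le_1:
  fixes xs :: "real list"
  assumes "\<And>x. x \<in> set xs \<Longrightarrow> 0 \<le> x \<and> x \<le> 1"
  shows "prod_list xs \<le> 1"
  using assms by (induction xs) (auto intro: mult_le_one prod_list_nonneg)

definition list_prob :: "'a pmf \<Rightarrow> 'a list \<Rightarrow> real" where
  "list_prob p zs = prod_list (map (pmf p) zs)"

lemma list_prob_nonneg: "0 \<le> list_prob p zs"
  unfolding list_prob_def by (rule prod_list_nonneg) auto

lemma list_prob_eq_0: "\<exists>z\<in>set zs. pmf p z = 0 \<Longrightarrow> list_prob p zs = 0"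
  unfolding list_prob_def by (induction zs) auto

lemma sum_list_prob: "(\<Sum>zs\<in>lists_len n. list_prob p zs) = 1" for p :: "'a::finite pmf"
  by (simp add: list_prob_def sum_prod_list_lists_len sum_pmf_eq_1)

lemma pmf_iid_pmf: "pmf (iid_pmf n p) zs = (if length zs = n then list_prob p zs else 0)"
proof (induction n arbitrary: zs)
  case 0
  then show ?case by (cases zs) (auto simp: list_prob_def pmf_return)
next
  case (Suc n)
  have iid: "iid_pmf (Suc n) p = map_pmf (\<lambda>(z, zs). z # zs) (pair_pmf p (iid_pmf n p))"
    by (simp add: pair_pmf_def map_pmf_def bind_assoc_pmf bind_return_pmf)
  have inj: "inj (\<lambda>(z :: 'a, zs). z # zs)"
    by (auto simp: inj_def)
  show ?case
  proof (cases zs)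
    case Nil
    have "[] \<notin> set_pmf (iid_pmf (Suc n) p)"
      unfolding iid by auto
    then show ?thesis using Nil by (simp add: set_pmf_eq)
  next
    case (Cons z zs')
    have "pmf (iid_pmf (Suc n) p) zs = pmf (pair_pmf p (iid_pmf n p)) (z, zs')"
      unfolding iid Cons using pmf_map_inj'[OF inj, of _ "(z, zs')"] by simp
    then show ?thesis
      using Suc Cons by (simp add: pmf_pair list_prob_def)
  qed
qed

lemma prob_iid_pmf:
  fixes p :: "'a::finite pmf"
  shows "measure_pmf.prob (iid_pmf n p) A = (\<Sum>zs\<in>A \<inter> lists_len n. list_prob p zs)"
proof -
  have "measure_pmf.prob (iid_pmf n p) A = measure_pmf.prob (iid_pmf n p) (A \<inter> lists_len n)"
    by (rule measure_prob_cong_0) (auto simp: pmf_iid_pmf lists_len_def)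
  also have "\<dots> = (\<Sum>zs\<in>A \<inter> lists_len n. pmf (iid_pmf n p) zs)"
    by (rule measure_measure_pmf_finite) simp
  also have "\<dots> = (\<Sum>zs\<in>A \<inter> lists_len n. list_prob p zs)"
    by (rule sum.cong) (auto simp: pmf_iid_pmf lists_len_def)
  finally show ?thesis .
qed

lemma sum_lists_len_Suc_list_prob:
  fixes p :: "'a::finite pmf"
  shows "(\<Sum>zs\<in>lists_len (Suc n). list_prob p zs * F zs)
       = (\<Sum>z\<in>UNIV. pmf p z * (\<Sum>zs\<in>lists_len n. list_prob p zs * F (z # zs)))"
  by (simp add: sum_lists_len_Suc list_prob_def sum_distrib_left mult.assoc)

lemma iid_mean_sum_list:
  fixes p :: "'a::finite pmf" and k :: "'a \<Rightarrow> real"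
  assumes "(\<Sum>z\<in>UNIV. pmf p z * k z) = 0"
  shows "(\<Sum>zs\<in>lists_len n. list_prob p zs * sum_list (map k zs)) = 0"
proof (induction n)
  case (Suc n)
  then show ?case
    using assms
    by (simp add: sum_lists_len_Suc_list_prob distrib_left sum.distrib
        flip: sum_distrib_right add: sum_list_prob)
qed simp

lemma iid_second_moment_sum_list:
  fixes p :: "'a::finite pmf" and k :: "'a \<Rightarrow> real"
  assumes mean0: "(\<Sum>z\<in>UNIV. pmf p z * k z) = 0"
  shows "(\<Sum>zs\<in>lists_len n. list_prob p zs * (sum_list (map k zs))\<^sup>2)
       = real n * (\<Sum>z\<in>UNIV. pmf p z * (k z)\<^sup>2)"
proof (induction n)
  case (Suc n)
  let ?V = "\<Sum>z\<in>UNIV. pmf p z * (k z)\<^sup>2"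
  have "(\<Sum>zs\<in>lists_len (Suc n). list_prob p zs * (sum_list (map k zs))\<^sup>2)
     = (\<Sum>z\<in>UNIV. pmf p z * ((\<Sum>zs\<in>lists_len n. list_prob p zs * (k z)\<^sup>2)
         + 2 * k z * (\<Sum>zs\<in>lists_len n. list_prob p zs * sum_list (map k zs))
         + (\<Sum>zs\<in>lists_len n. list_prob p zs * (sum_list (map k zs))\<^sup>2)))"
    by (simp add: sum_lists_len_Suc_list_prob power2_sum distrib_left sum.distrib
        sum_distrib_left algebra_simps)
  also have "\<dots> = (\<Sum>z\<in>UNIV. pmf p z * ((k z)\<^sup>2 + real n * ?V))"
    using Suc iid_mean_sum_list[OF mean0, of n] by (simp flip: sum_distrib_right add: sum_list_prob)
  also have "\<dots> = ?V + real n * ?V"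
    by (simp add: distrib_left sum.distrib sum_pmf_eq_1 flip: sum_distrib_right)
  finally show ?case
    by (simp add: algebra_simps)
qed simp

lemma iid_chebyshev:
  fixes p :: "'a::finite pmf" and h :: "'a \<Rightarrow> real"
  assumes n: "n > 0" and \<delta>: "\<delta> > 0"
  defines "\<mu> \<equiv> \<Sum>z\<in>UNIV. pmf p z * h z"
  shows "(\<Sum>zs\<in>{zs\<in>lists_len n. real n * \<delta> \<le> \<bar>sum_list (map h zs) - real n * \<mu>\<bar>}. list_prob p zs)
          \<le> (\<Sum>z\<in>UNIV. pmf p z * (h z - \<mu>)\<^sup>2) / (real n * \<delta>\<^sup>2)"
proof -
  define k where "k z = h z - \<mu>" for z
  have mean0: "(\<Sum>z\<in>UNIV. pmf p z * k z) = 0"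
    by (simp add: k_def right_diff_distrib sum_subtractf \<mu>_def flip: sum_distrib_right
        add: sum_pmf_eq_1)
  have sum_k: "sum_list (map k zs) = sum_list (map h zs) - real (length zs) * \<mu>" for zs
    by (induction zs) (auto simp: k_def algebra_simps)
  let ?S = "{zs\<in>lists_len n. real n * \<delta> \<le> \<bar>sum_list (map h zs) - real n * \<mu>\<bar>}"
  have "(\<Sum>zs\<in>?S. list_prob p zs) * (real n * \<delta>)\<^sup>2 = (\<Sum>zs\<in>?S. list_prob p zs * (real n * \<delta>)\<^sup>2)"
    by (simp add: sum_distrib_right)
  also have "\<dots> \<le> (\<Sum>zs\<in>?S. list_prob p zs * (sum_list (map k zs))\<^sup>2)"
  proof (rule sum_mono)
    fix zs assume "zs \<in> ?S"
    then have "real n * \<delta> \<le> \<bar>sum_list (map k zs)\<bar>"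
      by (simp add: sum_k lists_len_def)
    then have "(real n * \<delta>)\<^sup>2 \<le> (sum_list (map k zs))\<^sup>2"
      using n \<delta> by (metis abs_le_square_iff abs_of_nonneg less_imp_le of_nat_0_le_iff zero_le_mult_iff)
    then show "list_prob p zs * (real n * \<delta>)\<^sup>2 \<le> list_prob p zs * (sum_list (map k zs))\<^sup>2"
      by (simp add: mult_left_mono list_prob_nonneg)
  qed
  also have "\<dots> \<le> (\<Sum>zs\<in>lists_len n. list_prob p zs * (sum_list (map k zs))\<^sup>2)"
    by (rule sum_mono2) (auto simp: list_prob_nonneg)
  also have "\<dots> = real n * (\<Sum>z\<in>UNIV. pmf p z * (h z - \<mu>)\<^sup>2)"
    using iid_second_moment_sum_list[OF mean0, of n] by (simp add: k_def[abs_def])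
  finally show ?thesis
    using n \<delta> by (simp add: pos_le_divide_eq power2_eq_square field_simps)
qed

section \<open>Information densities and typical sequences\<close>

lemma pmf_le_marg_X: "pmf P z \<le> marg_X P (fst z)" for P :: "('x::finite \<times> 'y::finite) pmf"
  unfolding marg_X_def by (cases z) (auto intro: member_le_sum)

lemma pmf_le_marg_Y: "pmf P z \<le> marg_Y P (snd z)" for P :: "('x::finite \<times> 'y::finite) pmf"
  unfolding marg_Y_def by (cases z) (auto intro: member_le_sum)

lemma marg_X_nonneg: "0 \<le> marg_X P x"
  unfolding marg_X_def by (simp add: sum_nonneg)

lemma marg_Y_nonneg: "0 \<le> marg_Y P y"
  unfolding marg_Y_def by (simp add: sum_nonneg)

lemma sum_marg_X: "(\<Sum>x\<in>UNIV. marg_X P x) = 1" for P :: "('x::finite \<times> 'y::finite) pmf"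
proof -
  have "sum (pmf P) (UNIV \<times> UNIV) = 1"
    using sum_pmf_eq_1[of UNIV P] by simp
  then show ?thesis
    unfolding marg_X_def by (simp add: sum.cartesian_product)
qed

lemma sum_marg_Y: "(\<Sum>y\<in>UNIV. marg_Y P y) = 1" for P :: "('x::finite \<times> 'y::finite) pmf"
proof -
  have "sum (pmf P) (UNIV \<times> UNIV) = 1"
    using sum_pmf_eq_1[of UNIV P] by simp
  then show ?thesis
    unfolding marg_Y_def by (subst sum.swap) (simp add: sum.cartesian_product)
qed

text \<open>With \<open>m\<close> the marginal of the other coordinate, \<open>self_info P m\<close> is the conditional
  information density \<open>-log P(x|y)\<close> (resp. \<open>-log P(y|x)\<close>), whose mean is the conditional entropy.\<close>

definition self_info :: "'a pmf \<Rightarrow> ('a \<Rightarrow> real) \<Rightarrow> 'a \<Rightarrow> real" where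
  "self_info p m z = (if pmf p z = 0 then 0 else - log 2 (pmf p z / m z))"

abbreviation info_X_given_Y :: "('x \<times> 'y) pmf \<Rightarrow> 'x \<times> 'y \<Rightarrow> real" where
  "info_X_given_Y P \<equiv> self_info P (\<lambda>z. marg_Y P (snd z))"

abbreviation info_Y_given_X :: "('x \<times> 'y) pmf \<Rightarrow> 'x \<times> 'y \<Rightarrow> real" where
  "info_Y_given_X P \<equiv> self_info P (\<lambda>z. marg_X P (fst z))"

lemma cond_entropy_XY_eq: "cond_entropy_XY P = (\<Sum>z\<in>UNIV. pmf P z * info_X_given_Y P z)"
  unfolding cond_entropy_XY_def self_info_def UNIV_Times_UNIV[symmetric] sum.cartesian_product
  by (intro sum.cong) auto

lemma cond_entropy_YX_eq: "cond_entropy_YX P = (\<Sum>z\<in>UNIV. pmf P z * info_Y_given_X P z)"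
  unfolding cond_entropy_YX_def self_info_def UNIV_Times_UNIV[symmetric] sum.cartesian_product
  by (intro sum.cong) auto

lemma self_info_nonneg:
  assumes "pmf p z \<le> m z"
  shows "0 \<le> self_info p m z"
proof (cases "pmf p z = 0")
  case False
  then have "0 < pmf p z"
    using pmf_nonneg[of p z] by linarith
  then have "log 2 (pmf p z / m z) \<le> log 2 1"
    using assms by (subst log_le_cancel_iff) auto
  then show ?thesis
    by (simp add: self_info_def)
qed (simp add: self_info_def)

lemma cond_entropy_XY_nonneg: "0 \<le> cond_entropy_XY P" for P :: "('x::finite \<times> 'y::finite) pmf"
  unfolding cond_entropy_XY_eq
  by (intro sum_nonneg mult_nonneg_nonneg self_info_nonneg pmf_le_marg_Y) simp_all

lemma cond_entropy_YX_nonneg: "0 \<le> cond_entropy_YX P" for P :: "('x::finite \<times> 'y::finite) pmf"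
  unfolding cond_entropy_YX_eq
  by (intro sum_nonneg mult_nonneg_nonneg self_info_nonneg pmf_le_marg_X) simp_all

lemma prod_list_ratio_eq_powr:
  assumes "\<forall>z\<in>set zs. 0 < pmf p z \<and> pmf p z \<le> m z"
  shows "prod_list (map (\<lambda>z. pmf p z / m z) zs) = 2 powr (- sum_list (map (self_info p m) zs))"
  using assms
proof (induction zs)
  case (Cons z zs)
  then have "pmf p z / m z = 2 powr (- self_info p m z)"
    by (auto simp: self_info_def)
  with Cons show ?case
    by (simp add: powr_add[symmetric])
qed simp

lemma list_prob_eq_prod_list_powr:
  assumes "\<forall>z\<in>set zs. 0 < pmf p z \<and> pmf p z \<le> m z"
  shows "list_prob p zs = prod_list (map m zs) * 2 powr (- sum_list (map (self_info p m) zs))"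
proof -
  have "list_prob p zs = prod_list (map m zs) * prod_list (map (\<lambda>z. pmf p z / m z) zs)"
    using assms by (induction zs) (auto simp: list_prob_def)
  then show ?thesis
    using prod_list_ratio_eq_powr[OF assms] by simp
qed

lemma list_prob_le_powr_prod_list:
  assumes "\<forall>z\<in>set zs. 0 < pmf p z \<and> pmf p z \<le> m z"
    and "a \<le> sum_list (map (self_info p m) zs)"
  shows "list_prob p zs \<le> 2 powr (- a) * prod_list (map m zs)"
proof -
  have "0 \<le> prod_list (map m zs)"
    using assms(1) by (intro prod_list_nonneg) auto
  then show ?thesis
    unfolding list_prob_eq_prod_list_powr[OF assms(1)] using assms(2)
    by (subst mult.commute) (intro mult_left_mono; simp)
qed

lemma powr_le_prod_list_ratio:
  assumes "\<forall>z\<in>set zs. 0 < pmf p z \<and> pmf p z \<le> m z"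
    and "sum_list (map (self_info p m) zs) \<le> b"
  shows "2 powr (- b) \<le> prod_list (map (\<lambda>z. pmf p z / m z) zs)"
  unfolding prod_list_ratio_eq_powr[OF assms(1)] using assms(2) by simp

definition typical :: "('x::finite \<times> 'y::finite) pmf \<Rightarrow> real \<Rightarrow> nat \<Rightarrow> ('x \<times> 'y) list set" where
  "typical P \<delta> n = {zs \<in> lists_len n. (\<forall>z\<in>set zs. 0 < pmf P z)
      \<and> \<bar>sum_list (map (info_X_given_Y P) zs) - real n * cond_entropy_XY P\<bar> < real n * \<delta>
      \<and> \<bar>sum_list (map (info_Y_given_X P) zs) - real n * cond_entropy_YX P\<bar> < real n * \<delta>}"

definition info_variance :: "('x::finite \<times> 'y::finite) pmf \<Rightarrow> real" where
  "info_variance P = (\<Sum>z\<in>UNIV. pmf P z * (info_X_given_Y P z - cond_entropy_XY P)\<^sup>2)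
                   + (\<Sum>z\<in>UNIV. pmf P z * (info_Y_given_X P z - cond_entropy_YX P)\<^sup>2)"

lemma info_variance_nonneg: "0 \<le> info_variance P"
  unfolding info_variance_def by (intro add_nonneg_nonneg sum_nonneg) auto

lemma typical_subset_lists_len: "typical P \<delta> n \<subseteq> lists_len n"
  by (auto simp: typical_def)

lemma finite_typical [simp]: "finite (typical P \<delta> n)"
  using finite_subset[OF typical_subset_lists_len] by simp

lemma sum_typical_le_1: "(\<Sum>zs\<in>typical P \<delta> n. list_prob P zs) \<le> 1"
  for P :: "('x::finite \<times> 'y::finite) pmf"
proof -
  have "(\<Sum>zs\<in>typical P \<delta> n. list_prob P zs) \<le> (\<Sum>zs\<in>lists_len n. list_prob P zs)"
    by (rule sum_mono2) (use typical_subset_lists_len in \<open>auto simp: list_prob_nonneg\<close>)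
  then show ?thesis
    by (simp add: sum_list_prob)
qed

lemma prob_atypical_le:
  fixes P :: "('x::finite \<times> 'y::finite) pmf"
  assumes n: "n > 0" and \<delta>: "\<delta> > 0"
  shows "(\<Sum>zs\<in>lists_len n - typical P \<delta> n. list_prob P zs) \<le> info_variance P / (real n * \<delta>\<^sup>2)"
proof -
  define S1 where "S1 = {zs\<in>lists_len n.
    real n * \<delta> \<le> \<bar>sum_list (map (info_X_given_Y P) zs) - real n * cond_entropy_XY P\<bar>}"
  define S2 where "S2 = {zs\<in>lists_len n.
    real n * \<delta> \<le> \<bar>sum_list (map (info_Y_given_X P) zs) - real n * cond_entropy_YX P\<bar>}"
  have "(\<Sum>zs\<in>lists_len n - typical P \<delta> n. list_prob P zs)
      \<le> (\<Sum>zs\<in>lists_len n - typical P \<delta> n. list_prob P zs * of_bool (zs \<in> S1)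
                                           + list_prob P zs * of_bool (zs \<in> S2))"
  proof (rule sum_mono)
    fix zs assume zs: "zs \<in> lists_len n - typical P \<delta> n"
    show "list_prob P zs \<le> list_prob P zs * of_bool (zs \<in> S1) + list_prob P zs * of_bool (zs \<in> S2)"
    proof (cases "\<forall>z\<in>set zs. 0 < pmf P z")
      case True
      then have "zs \<in> S1 \<or> zs \<in> S2"
        using zs by (auto simp: typical_def S1_def S2_def not_less)
      then show ?thesis
        by (auto simp: list_prob_nonneg)
    next
      case False
      then show ?thesis
        by (simp add: list_prob_eq_0 order_less_le)
    qed
  qed
  also have "\<dots> \<le> (\<Sum>zs\<in>lists_len n. list_prob P zs * of_bool (zs \<in> S1)
                                   + list_prob P zs * of_bool (zs \<in> S2))"
    by (rule sum_mono2) (auto simp: list_prob_nonneg)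
  also have "\<dots> = (\<Sum>zs\<in>S1. list_prob P zs) + (\<Sum>zs\<in>S2. list_prob P zs)"
    by (simp add: sum.distrib sum_mult_of_bool_eq S1_def S2_def Collect_conj_eq)
  also have "\<dots> \<le> info_variance P / (real n * \<delta>\<^sup>2)"
    using iid_chebyshev[OF n \<delta>, of P "info_X_given_Y P"] iid_chebyshev[OF n \<delta>, of P "info_Y_given_X P"]
    unfolding S1_def S2_def info_variance_def add_divide_distrib
      cond_entropy_XY_eq[symmetric] cond_entropy_YX_eq[symmetric]
    by linarith
  finally show ?thesis .
qed

lemma typical_pos:
  fixes P :: "('x::finite \<times> 'y::finite) pmf"
  assumes "zs \<in> typical P \<delta> n"
  shows "\<forall>z\<in>set zs. 0 < pmf P z \<and> pmf P z \<le> marg_X P (fst z)"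
    and "\<forall>z\<in>set zs. 0 < pmf P z \<and> pmf P z \<le> marg_Y P (snd z)"
  using assms by (auto simp: typical_def pmf_le_marg_X pmf_le_marg_Y)

lemma typical_list_prob_le_X:
  fixes P :: "('x::finite \<times> 'y::finite) pmf"
  assumes "zs \<in> typical P \<delta> n"
  shows "list_prob P zs
       \<le> 2 powr (- (real n * (cond_entropy_YX P - \<delta>))) * prod_list (map (marg_X P) (map fst zs))"
proof -
  have "real n * (cond_entropy_YX P - \<delta>) \<le> sum_list (map (info_Y_given_X P) zs)"
    using assms by (auto simp: typical_def abs_less_iff algebra_simps)
  from list_prob_le_powr_prod_list[OF typical_pos(1)[OF assms] this] show ?thesis
    by (simp add: comp_def)
qed

lemma typical_list_prob_le_Y:
  fixes P :: "('x::finite \<times> 'y::finite) pmf"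
  assumes "zs \<in> typical P \<delta> n"
  shows "list_prob P zs
       \<le> 2 powr (- (real n * (cond_entropy_XY P - \<delta>))) * prod_list (map (marg_Y P) (map snd zs))"
proof -
  have "real n * (cond_entropy_XY P - \<delta>) \<le> sum_list (map (info_X_given_Y P) zs)"
    using assms by (auto simp: typical_def abs_less_iff algebra_simps)
  from list_prob_le_powr_prod_list[OF typical_pos(2)[OF assms] this] show ?thesis
    by (simp add: comp_def)
qed

lemma transcript_rectangle:
  "transcript T a b = transcript T a' b' \<Longrightarrow> transcript T a b' = transcript T a b"
  by (induction T) auto

lemma length_transcript_le_depth: "length (transcript T a b) \<le> depth T"
  by (induction T) auto

fun send_bits1 :: "nat \<Rightarrow> ('a \<Rightarrow> bool list) \<Rightarrow> ('a, 'b) ptree \<Rightarrow> ('a, 'b) ptree" where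
  "send_bits1 0 h c = c"
| "send_bits1 (Suc k) h c =
     Node1 (\<lambda>a. hd (h a)) (send_bits1 k (\<lambda>a. tl (h a)) c) (send_bits1 k (\<lambda>a. tl (h a)) c)"

fun send_bits2 :: "nat \<Rightarrow> ('b \<Rightarrow> bool list) \<Rightarrow> ('a, 'b) ptree \<Rightarrow> ('a, 'b) ptree" where
  "send_bits2 0 h c = c"
| "send_bits2 (Suc k) h c =
     Node2 (\<lambda>b. hd (h b)) (send_bits2 k (\<lambda>b. tl (h b)) c) (send_bits2 k (\<lambda>b. tl (h b)) c)"

lemma transcript_send_bits1:
  "length (h a) = k \<Longrightarrow> transcript (send_bits1 k h c) a b = h a @ transcript c a b"
  by (induction k arbitrary: h) (auto simp: length_Suc_conv)

lemma transcript_send_bits2: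
  "length (h b) = k \<Longrightarrow> transcript (send_bits2 k h c) a b = h b @ transcript c a b"
  by (induction k arbitrary: h) (auto simp: length_Suc_conv)

lemma depth_send_bits1: "depth (send_bits1 k h c) = k + depth c"
  by (induction k arbitrary: h) auto

lemma depth_send_bits2: "depth (send_bits2 k h c) = k + depth c"
  by (induction k arbitrary: h) auto

definition exchange_succeeds ::
  "('x, 'y) protocol \<Rightarrow> ('x list \<Rightarrow> bool list \<Rightarrow> nat \<Rightarrow> nat \<Rightarrow> 'y list)
   \<Rightarrow> ('y list \<Rightarrow> bool list \<Rightarrow> nat \<Rightarrow> nat \<Rightarrow> 'x list) \<Rightarrow> nat \<Rightarrow> nat \<Rightarrow> nat \<Rightarrow> ('x \<times> 'y) list \<Rightarrow> bool" where
  "exchange_succeeds T dec1 dec2 ux uy u xys \<longleftrightarrow>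
     (let xs = map fst xys; ys = map snd xys; tr = transcript T (xs, ux, u) (ys, uy, u)
      in dec1 xs tr ux u = ys \<and> dec2 ys tr uy u = xs)"

lemma success_prob_return:
  "success_prob P n (return_pmf ux) (return_pmf uy) (return_pmf u) T dec1 dec2
   = measure_pmf.prob (iid_pmf n P) {xys. exchange_succeeds T dec1 dec2 ux uy u xys}"
proof -
  have "do { xys \<leftarrow> iid_pmf n P; ux \<leftarrow> return_pmf ux; uy \<leftarrow> return_pmf uy; u \<leftarrow> return_pmf u;
             return_pmf (xys, ux, uy, u) } = map_pmf (\<lambda>xys. (xys, ux, uy, u)) (iid_pmf n P)"
    by (simp add: bind_return_pmf map_pmf_def)
  then show ?thesis
    by (simp add: success_prob_def exchange_succeeds_def vimage_def)
qed

lemma measure_bind_pmf_le: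
  assumes "\<And>x. x \<in> set_pmf M \<Longrightarrow> measure_pmf.prob (f x) A \<le> c" "0 \<le> c"
  shows "measure_pmf.prob (bind_pmf M f) A \<le> c"
proof -
  have "emeasure (measure_pmf (bind_pmf M f)) A = (\<integral>\<^sup>+x. emeasure (measure_pmf (f x)) A \<partial>measure_pmf M)"
    by simp
  also have "\<dots> \<le> (\<integral>\<^sup>+x. ennreal c \<partial>measure_pmf M)"
    by (rule nn_integral_mono_AE)
      (auto simp: AE_measure_pmf_iff measure_pmf.emeasure_eq_measure assms ennreal_leI)
  finally show ?thesis
    using assms(2) by (simp add: measure_pmf.emeasure_eq_measure)
qed

text \<open>The shared and private randomness is independent of the observations, so a bound on the
  success probability that holds for every fixed value of the randomness holds on average.\<close>

lemma success_prob_le: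
  assumes "\<And>ux uy u. measure_pmf.prob (iid_pmf n P) {xys. exchange_succeeds T dec1 dec2 ux uy u xys} \<le> c"
    and "0 \<le> c"
  shows "success_prob P n PUX PUY PU T dec1 dec2 \<le> c"
proof -
  have reorder: "(do { xys \<leftarrow> iid_pmf n P; ux \<leftarrow> PUX; uy \<leftarrow> PUY; u \<leftarrow> PU; return_pmf (xys, ux, uy, u) })
      = (do { ux \<leftarrow> PUX; uy \<leftarrow> PUY; u \<leftarrow> PU; map_pmf (\<lambda>xys. (xys, ux, uy, u)) (iid_pmf n P) })"
    by (simp add: map_pmf_def bind_commute_pmf[of "iid_pmf n P"])
  show ?thesis
    unfolding success_prob_def reorder
  proof (rule measure_bind_pmf_le[OF _ assms(2)], rule measure_bind_pmf_le[OF _ assms(2)],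
      rule measure_bind_pmf_le[OF _ assms(2)])
    fix ux uy u
    show "measure_pmf.prob (map_pmf (\<lambda>xys. (xys, ux, uy, u)) (iid_pmf n P))
        {(xys, ux, uy, u). let xs = map fst xys; ys = map snd xys; tr = transcript T (xs, ux, u) (ys, uy, u)
                          in dec1 xs tr ux u = ys \<and> dec2 ys tr uy u = xs} \<le> c"
      using assms(1)[of ux uy u] by (simp add: exchange_succeeds_def vimage_def)
  qed
qed

section \<open>Converse\<close>

lemma card_bool_lists_le:
  assumes "\<And>bs. bs \<in> S \<Longrightarrow> length bs \<le> d"
  shows "real (card (S :: bool list set)) \<le> 2 ^ Suc d"
proof -
  have "card S \<le> card {bs :: bool list. set bs \<subseteq> UNIV \<and> length bs \<le> d}"
    using assms by (intro card_mono finite_lists_length_le) auto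
  also have "\<dots> = (\<Sum>i\<le>d. 2 ^ i)"
    using card_lists_length_le[of "UNIV :: bool set" d] by simp
  also have "\<dots> < 2 ^ Suc d"
    by (induction d) auto
  finally have "card S \<le> 2 ^ Suc d"
    by simp
  then show ?thesis
    by (metis of_nat_le_iff of_nat_numeral of_nat_power)
qed

lemma fiber_mass_sq_le:
  fixes q :: "'w \<Rightarrow> real" and \<mu> :: "'a \<Rightarrow> real" and \<nu> :: "'b \<Rightarrow> real"
  assumes "inj_on f V" "inj_on g V"
    and q_nonneg: "\<And>v. v \<in> V \<Longrightarrow> 0 \<le> q v"
    and q_le_\<mu>: "\<And>v. v \<in> V \<Longrightarrow> q v \<le> c2 * \<mu> (f v)"
    and q_le_\<nu>: "\<And>v. v \<in> V \<Longrightarrow> q v \<le> c1 * \<nu> (g v)"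
  shows "(\<Sum>v\<in>V. q v)\<^sup>2 \<le> c1 * c2 * ((\<Sum>a\<in>f ` V. \<mu> a) * (\<Sum>b\<in>g ` V. \<nu> b))"
proof -
  have s_nonneg: "0 \<le> (\<Sum>v\<in>V. q v)"
    using q_nonneg by (simp add: sum_nonneg)
  have s_le_\<mu>: "(\<Sum>v\<in>V. q v) \<le> c2 * (\<Sum>a\<in>f ` V. \<mu> a)"
    using q_le_\<mu> by (simp add: sum.reindex assms(1) sum_distrib_left sum_mono)
  have s_le_\<nu>: "(\<Sum>v\<in>V. q v) \<le> c1 * (\<Sum>b\<in>g ` V. \<nu> b)"
    using q_le_\<nu> by (simp add: sum.reindex assms(2) sum_distrib_left sum_mono)
  have "(\<Sum>v\<in>V. q v)\<^sup>2 \<le> (c2 * (\<Sum>a\<in>f ` V. \<mu> a)) * (c1 * (\<Sum>b\<in>g ` V. \<nu> b))"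
    unfolding power2_eq_square
    by (rule mult_mono[OF s_le_\<mu> s_le_\<nu> order_trans[OF s_nonneg s_le_\<mu>] s_nonneg])
  then show ?thesis
    by (simp add: mult_ac)
qed

text \<open>Within one transcript class both projections are injective, so the mass of the class is at
  most \<open>c2\<close> times the \<open>\<mu>\<close>-mass of its first projection and at most \<open>c1\<close> times the \<open>\<nu>\<close>-mass of
  its second, and the product of the two projections lies in the rectangle of the class. Hence the
  squared class masses sum to at most \<open>c1 c2\<close>, and Cauchy--Schwarz over the classes finishes.\<close>

lemma rectangle_mass_bound:
  fixes t :: "'a \<Rightarrow> 'b \<Rightarrow> 't" and q :: "'w \<Rightarrow> real" and \<mu> :: "'a \<Rightarrow> real" and \<nu> :: "'b \<Rightarrow> real"
  assumes fin: "finite W" "finite A" "finite B" and range: "f ` W \<subseteq> A" "g ` W \<subseteq> B"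
    and rect: "\<And>a b a' b'. t a b = t a' b' \<Longrightarrow> t a b' = t a b"
    and decode: "\<And>w w'. \<lbrakk>w \<in> W; w' \<in> W; t (f w) (g w) = t (f w') (g w'); f w = f w'\<rbrakk> \<Longrightarrow> w = w'"
      "\<And>w w'. \<lbrakk>w \<in> W; w' \<in> W; t (f w) (g w) = t (f w') (g w'); g w = g w'\<rbrakk> \<Longrightarrow> w = w'"
    and q: "\<And>w. w \<in> W \<Longrightarrow> 0 \<le> q w" "\<And>w. w \<in> W \<Longrightarrow> q w \<le> c2 * \<mu> (f w)"
      "\<And>w. w \<in> W \<Longrightarrow> q w \<le> c1 * \<nu> (g w)"
    and \<mu>\<nu>: "\<And>a. 0 \<le> \<mu> a" "\<And>b. 0 \<le> \<nu> b" "(\<Sum>a\<in>A. \<mu> a) * (\<Sum>b\<in>B. \<nu> b) \<le> 1"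
    and c: "0 \<le> c1" "0 \<le> c2"
  shows "(\<Sum>w\<in>W. q w)\<^sup>2 \<le> c1 * c2 * card ((\<lambda>w. t (f w) (g w)) ` W)"
proof -
  define tw where "tw w = t (f w) (g w)" for w
  define V where "V \<tau> = {w\<in>W. tw w = \<tau>}" for \<tau>
  define R where "R \<tau> = {p \<in> A \<times> B. t (fst p) (snd p) = \<tau>}" for \<tau>
  define F where "F p = \<mu> (fst p) * \<nu> (snd p)" for p
  have F_nonneg: "0 \<le> F p" for p
    by (simp add: F_def \<mu>\<nu>)
  have fiber: "(\<Sum>w\<in>V \<tau>. q w)\<^sup>2 \<le> c1 * c2 * (\<Sum>p\<in>R \<tau>. F p)" for \<tau>
  proof -
    have "(f w, g w') \<in> R \<tau>" if "w \<in> V \<tau>" "w' \<in> V \<tau>" for w w'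
    proof -
      have "t (f w) (g w') = \<tau>"
        using that rect[of "f w" "g w" "f w'" "g w'"] by (simp add: V_def tw_def)
      then show ?thesis
        using that range by (auto simp: R_def V_def)
    qed
    then have "f ` V \<tau> \<times> g ` V \<tau> \<subseteq> R \<tau>"
      by blast
    then have "(\<Sum>a\<in>f ` V \<tau>. \<mu> a) * (\<Sum>b\<in>g ` V \<tau>. \<nu> b) \<le> (\<Sum>p\<in>R \<tau>. F p)"
      unfolding sum_product sum.cartesian_product F_def case_prod_unfold
      by (intro sum_mono2) (auto simp: R_def fin intro!: mult_nonneg_nonneg \<mu>\<nu>)
    moreover have "(\<Sum>w\<in>V \<tau>. q w)\<^sup>2 \<le> c1 * c2 * ((\<Sum>a\<in>f ` V \<tau>. \<mu> a) * (\<Sum>b\<in>g ` V \<tau>. \<nu> b))"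
      by (rule fiber_mass_sq_le) (use decode q in \<open>auto simp: V_def tw_def inj_on_def\<close>)
    ultimately show ?thesis
      using c by (meson mult_left_mono mult_nonneg_nonneg order_trans)
  qed
  have classes: "(\<Sum>\<tau>\<in>tw ` W. \<Sum>p\<in>R \<tau>. F p) \<le> 1"
  proof -
    have "(\<Sum>\<tau>\<in>tw ` W. \<Sum>p\<in>R \<tau>. F p) = (\<Sum>p\<in>(\<Union>\<tau>\<in>tw ` W. R \<tau>). F p)"
      by (rule sum.UNION_disjoint[symmetric]) (auto simp: fin R_def)
    also have "\<dots> \<le> (\<Sum>p\<in>A \<times> B. F p)"
      by (rule sum_mono2) (auto simp: fin R_def F_nonneg)
    also have "\<dots> \<le> 1"
      using \<mu>\<nu>(3) by (simp add: F_def sum_product sum.cartesian_product case_prod_unfold)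
    finally show ?thesis .
  qed
  have "(\<Sum>w\<in>W. q w) = (\<Sum>\<tau>\<in>tw ` W. \<Sum>w\<in>V \<tau>. q w)"
    unfolding V_def using sum.image_gen[OF fin(1), of q tw] by simp
  then have "(\<Sum>w\<in>W. q w)\<^sup>2 \<le> (\<Sum>\<tau>\<in>tw ` W. (\<Sum>w\<in>V \<tau>. q w)\<^sup>2) * card (tw ` W)"
    by (simp add: sum_squared_le_sum_of_squares)
  also have "\<dots> \<le> (\<Sum>\<tau>\<in>tw ` W. c1 * c2 * (\<Sum>p\<in>R \<tau>. F p)) * card (tw ` W)"
    by (intro mult_right_mono sum_mono fiber) simp
  also have "\<dots> = c1 * c2 * (\<Sum>\<tau>\<in>tw ` W. \<Sum>p\<in>R \<tau>. F p) * card (tw ` W)"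
    by (simp add: sum_distrib_left)
  also have "\<dots> \<le> c1 * c2 * card (tw ` W)"
    using mult_left_le[OF classes mult_nonneg_nonneg[OF c]] by (simp add: mult_right_mono)
  finally show ?thesis
    by (simp add: tw_def)
qed

lemma typical_decodable_mass_le:
  fixes P :: "('x::finite \<times> 'y::finite) pmf" and tr :: "'x list \<Rightarrow> 'y list \<Rightarrow> bool list"
    and dec1 :: "'x list \<Rightarrow> bool list \<Rightarrow> 'y list" and dec2 :: "'y list \<Rightarrow> bool list \<Rightarrow> 'x list"
    and n :: nat and \<delta> :: real
  assumes rect: "\<And>a b a' b'. tr a b = tr a' b' \<Longrightarrow> tr a b' = tr a b"
    and len: "\<And>a b. length (tr a b) \<le> d"
  defines "W \<equiv> {zs \<in> typical P \<delta> n. dec1 (map fst zs) (tr (map fst zs) (map snd zs)) = map snd zs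
                  \<and> dec2 (map snd zs) (tr (map fst zs) (map snd zs)) = map fst zs}"
  shows "(\<Sum>zs\<in>W. list_prob P zs)
       \<le> sqrt (2 ^ Suc d * 2 powr (- (real n * (cond_entropy_XY P + cond_entropy_YX P - 2 * \<delta>))))"
proof -
  define c1 where "c1 = 2 powr (- (real n * (cond_entropy_XY P - \<delta>)))"
  define c2 where "c2 = 2 powr (- (real n * (cond_entropy_YX P - \<delta>)))"
  have W_typical: "W \<subseteq> typical P \<delta> n"
    by (auto simp: W_def)
  then have W_len: "W \<subseteq> lists_len n"
    using typical_subset_lists_len by blast
  have decoded: "dec1 (map fst zs) (tr (map fst zs) (map snd zs)) = map snd zs"
    "dec2 (map snd zs) (tr (map fst zs) (map snd zs)) = map fst zs" if "zs \<in> W" for zs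
    using that by (simp_all add: W_def)
  have "(\<Sum>zs\<in>W. list_prob P zs)\<^sup>2
      \<le> c1 * c2 * card ((\<lambda>zs. tr (map fst zs) (map snd zs)) ` W)"
  proof (rule rectangle_mass_bound[where A = "lists_len n" and B = "lists_len n"
        and f = "map fst" and g = "map snd" and t = tr and q = "list_prob P"
        and \<mu> = "\<lambda>xs. prod_list (map (marg_X P) xs)" and \<nu> = "\<lambda>ys. prod_list (map (marg_Y P) ys)"])
    show "finite W"
      by (rule finite_subset[OF W_len finite_lists_len])
    show "map fst ` W \<subseteq> lists_len n" "map snd ` W \<subseteq> lists_len n"
      using W_len by (auto simp: lists_len_def)
    show "zs = zs'" if "zs \<in> W" "zs' \<in> W"
      and "tr (map fst zs) (map snd zs) = tr (map fst zs') (map snd zs')" "map fst zs = map fst zs'"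
      for zs zs'
      using decoded[OF that(1)] decoded[OF that(2)] that(3,4) by (metis zip_map_fst_snd)
    show "zs = zs'" if "zs \<in> W" "zs' \<in> W"
      and "tr (map fst zs) (map snd zs) = tr (map fst zs') (map snd zs')" "map snd zs = map snd zs'"
      for zs zs'
      using decoded[OF that(1)] decoded[OF that(2)] that(3,4) by (metis zip_map_fst_snd)
    show "list_prob P zs \<le> c2 * prod_list (map (marg_X P) (map fst zs))" if "zs \<in> W" for zs
      using typical_list_prob_le_X[of zs P \<delta> n] that W_typical unfolding c2_def by blast
    show "list_prob P zs \<le> c1 * prod_list (map (marg_Y P) (map snd zs))" if "zs \<in> W" for zs
      using typical_list_prob_le_Y[of zs P \<delta> n] that W_typical unfolding c1_def by blast
    show "(\<Sum>xs\<in>lists_len n. prod_list (map (marg_X P) xs))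
        * (\<Sum>ys\<in>lists_len n. prod_list (map (marg_Y P) ys)) \<le> 1"
      by (simp add: sum_prod_list_lists_len sum_marg_X sum_marg_Y)
    show "\<And>a b a' b'. tr a b = tr a' b' \<Longrightarrow> tr a b' = tr a b"
      by (rule rect)
    show "0 \<le> prod_list (map (marg_X P) xs)" for xs
      by (rule prod_list_nonneg) (auto simp: marg_X_nonneg)
    show "0 \<le> prod_list (map (marg_Y P) ys)" for ys
      by (rule prod_list_nonneg) (auto simp: marg_Y_nonneg)
  qed (simp_all add: list_prob_nonneg c1_def c2_def)
  also have "\<dots> \<le> c1 * c2 * 2 ^ Suc d"
    using card_bool_lists_le[of "(\<lambda>zs. tr (map fst zs) (map snd zs)) ` W" d] len
    by (intro mult_left_mono) (auto simp: c1_def c2_def)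
  also have "\<dots> = 2 ^ Suc d * 2 powr (- (real n * (cond_entropy_XY P + cond_entropy_YX P - 2 * \<delta>)))"
    by (simp add: c1_def c2_def flip: powr_add) (simp add: algebra_simps)
  finally show ?thesis
    by (intro real_le_rsqrt)
qed

lemma prob_exchange_succeeds_le:
  fixes P :: "('x::finite \<times> 'y::finite) pmf"
  assumes n: "n > 0" and \<delta>: "\<delta> > 0"
  shows "measure_pmf.prob (iid_pmf n P) {xys. exchange_succeeds T dec1 dec2 ux uy u xys}
     \<le> info_variance P / (real n * \<delta>\<^sup>2)
      + sqrt (2 ^ Suc (depth T) * 2 powr (- (real n * (cond_entropy_XY P + cond_entropy_YX P - 2 * \<delta>))))"
proof -
  define tr where "tr a b = transcript T (a, ux, u) (b, uy, u)" for a b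
  define d1 where "d1 a \<tau> = dec1 a \<tau> ux u" for a \<tau>
  define d2 where "d2 b \<tau> = dec2 b \<tau> uy u" for b \<tau>
  define W where "W = {zs \<in> typical P \<delta> n. d1 (map fst zs) (tr (map fst zs) (map snd zs)) = map snd zs
                  \<and> d2 (map snd zs) (tr (map fst zs) (map snd zs)) = map fst zs}"
  have W_len: "W \<subseteq> lists_len n"
    using typical_subset_lists_len by (auto simp: W_def)
  then have finite_W: "finite W"
    by (rule finite_subset) simp
  have "measure_pmf.prob (iid_pmf n P) {xys. exchange_succeeds T dec1 dec2 ux uy u xys}
      = (\<Sum>zs\<in>{xys. exchange_succeeds T dec1 dec2 ux uy u xys} \<inter> lists_len n. list_prob P zs)"
    by (rule prob_iid_pmf)
  also have "\<dots> \<le> (\<Sum>zs\<in>(lists_len n - typical P \<delta> n) \<union> W. list_prob P zs)"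
  proof (rule sum_mono2)
    show "{xys. exchange_succeeds T dec1 dec2 ux uy u xys} \<inter> lists_len n
        \<subseteq> (lists_len n - typical P \<delta> n) \<union> W"
      by (auto simp: W_def tr_def d1_def d2_def exchange_succeeds_def Let_def)
  qed (simp_all add: finite_W list_prob_nonneg)
  also have "\<dots> = (\<Sum>zs\<in>lists_len n - typical P \<delta> n. list_prob P zs) + (\<Sum>zs\<in>W. list_prob P zs)"
    by (rule sum.union_disjoint[OF _ finite_W]) (auto simp: W_def)
  also have "\<dots> \<le> info_variance P / (real n * \<delta>\<^sup>2)
      + sqrt (2 ^ Suc (depth T) * 2 powr (- (real n * (cond_entropy_XY P + cond_entropy_YX P - 2 * \<delta>))))"
  proof (rule add_mono[OF prob_atypical_le[OF n \<delta>]])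
    show "(\<Sum>zs\<in>W. list_prob P zs)
        \<le> sqrt (2 ^ Suc (depth T) * 2 powr (- (real n * (cond_entropy_XY P + cond_entropy_YX P - 2 * \<delta>))))"
      unfolding W_def
    proof (rule typical_decodable_mass_le)
      show "tr a b' = tr a b" if "tr a b = tr a' b'" for a b a' b'
        using that unfolding tr_def by (rule transcript_rectangle)
      show "length (tr a b) \<le> depth T" for a b
        unfolding tr_def by (rule length_transcript_le_depth)
    qed
  qed
  finally show ?thesis .
qed

lemma depth_lower_bound:
  fixes P :: "('x::finite \<times> 'y::finite) pmf"
  assumes \<epsilon>: "\<epsilon> < 1" and n: "n > 0" and \<delta>: "\<delta> > 0"
    and small: "info_variance P / (real n * \<delta>\<^sup>2) \<le> (1 - \<epsilon>) / 2"
    and success: "1 - \<epsilon> \<le> success_prob P n PUX PUY PU T dec1 dec2"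
  shows "real n * (cond_entropy_XY P + cond_entropy_YX P - 2 * \<delta>) - 1 + log 2 (((1 - \<epsilon>) / 2)\<^sup>2)
       \<le> real (depth T)"
proof -
  define E where "E = real n * (cond_entropy_XY P + cond_entropy_YX P - 2 * \<delta>)"
  define X where "X = 2 ^ Suc (depth T) * 2 powr (- E)"
  have "success_prob P n PUX PUY PU T dec1 dec2 \<le> info_variance P / (real n * \<delta>\<^sup>2) + sqrt X"
    unfolding X_def E_def
    by (rule success_prob_le[OF prob_exchange_succeeds_le[OF n \<delta>]])
      (simp add: info_variance_nonneg)
  then have "(1 - \<epsilon>) / 2 \<le> sqrt X"
    using success small by argo
  then have "((1 - \<epsilon>) / 2)\<^sup>2 \<le> (sqrt X)\<^sup>2"
    using \<epsilon> by (intro power_mono) auto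
  then have "((1 - \<epsilon>) / 2)\<^sup>2 \<le> X"
    by (simp add: X_def)
  also have "X = 2 powr (real (Suc (depth T)) - E)"
  proof -
    have "(2::real) ^ Suc (depth T) = 2 powr real (Suc (depth T))"
      by (rule powr_realpow[symmetric]) simp
    then show ?thesis
      unfolding X_def by (simp only: powr_diff powr_minus_divide divide_inverse)
  qed
  finally have "log 2 (((1 - \<epsilon>) / 2)\<^sup>2) \<le> log 2 (2 powr (real (Suc (depth T)) - E))"
    using \<epsilon> by (subst log_le_cancel_iff) auto
  then show ?thesis
    by (simp add: E_def)
qed

section \<open>Achievability by random binning\<close>

lemma card_PiE_collision:
  assumes "finite A" "x \<in> A" "x' \<in> A" "x \<noteq> x'"
  shows "card {e \<in> PiE A (\<lambda>_. B). e x' = e x} * card B = card (PiE A (\<lambda>_. B))"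
proof -
  define A' where "A' = A - {x'}"
  have A: "A = insert x' A'" "x' \<notin> A'" "x \<in> A'" "finite A'"
    using assms by (auto simp: A'_def)
  have eq: "{e \<in> PiE A (\<lambda>_. B). e x' = e x} = (\<lambda>g. g(x' := g x)) ` PiE A' (\<lambda>_. B)"
  proof (intro equalityI subsetI)
    fix e assume e: "e \<in> {e \<in> PiE A (\<lambda>_. B). e x' = e x}"
    then have "e(x' := undefined) \<in> PiE A' (\<lambda>_. B)"
      using A by (auto simp: PiE_def extensional_def)
    moreover have "e = (e(x' := undefined))(x' := (e(x' := undefined)) x)"
      using e A by auto
    ultimately show "e \<in> (\<lambda>g. g(x' := g x)) ` PiE A' (\<lambda>_. B)"
      by blast
  qed (use A in \<open>auto simp: PiE_def extensional_def\<close>)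
  have "inj_on (\<lambda>g. g(x' := g x)) (PiE A' (\<lambda>_. B))"
  proof (rule inj_onI)
    fix g g' assume "g \<in> PiE A' (\<lambda>_. B)" "g' \<in> PiE A' (\<lambda>_. B)" "g(x' := g x) = g'(x' := g' x)"
    then show "g = g'"
      using A by (metis PiE_arb fun_upd_idem_iff fun_upd_upd)
  qed
  then have "card {e \<in> PiE A (\<lambda>_. B). e x' = e x} = card B ^ card A'"
    unfolding eq by (simp add: card_image card_PiE A)
  then show ?thesis
    by (simp add: card_PiE A)
qed

lemma sum_PiE_collision:
  assumes "finite A" "finite B" "B \<noteq> {}" "x \<in> A" "x' \<in> A" "x \<noteq> x'"
  shows "(\<Sum>e\<in>PiE A (\<lambda>_. B). of_bool (e x' = e x) :: real) = card (PiE A (\<lambda>_. B)) / card B"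
  using card_PiE_collision[of A x x' B] assms
  by (simp add: sum_of_bool_eq finite_PiE Int_def field_simps flip: of_nat_mult)

lemma exists_le_average:
  fixes G :: "'e \<Rightarrow> real" and c :: real
  assumes "finite F" "F \<noteq> {}" "(\<Sum>e\<in>F. G e) \<le> card F * c"
  shows "\<exists>e\<in>F. G e \<le> c"
proof (rule ccontr)
  assume "\<not> (\<exists>e\<in>F. G e \<le> c)"
  then have "(\<Sum>e\<in>F. c) < (\<Sum>e\<in>F. G e)"
    using assms(1,2) by (intro sum_strict_mono) auto
  with assms(3) show False
    by simp
qed

definition bin_collision :: "'b set \<Rightarrow> ('b \<Rightarrow> 'c) \<Rightarrow> 'b \<Rightarrow> bool" where
  "bin_collision S e b \<longleftrightarrow> (\<exists>b'\<in>S. b' \<noteq> b \<and> e b' = e b)"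

lemma collision_mass_le_count:
  fixes Q :: "'z \<Rightarrow> real"
  assumes "finite Z" "\<And>z. z \<in> Z \<Longrightarrow> 0 \<le> Q z" "\<And>z. z \<in> Z \<Longrightarrow> finite (S z)"
  shows "(\<Sum>z\<in>{z\<in>Z. bin_collision (S z) e (b z)}. Q z)
       \<le> (\<Sum>z\<in>Z. Q z * (\<Sum>b'\<in>S z - {b z}. of_bool (e b' = e (b z))))"
proof -
  have "Q z \<le> Q z * (\<Sum>b'\<in>S z - {b z}. of_bool (e b' = e (b z)))"
    if z: "z \<in> Z" and coll: "bin_collision (S z) e (b z)" for z
  proof -
    obtain b' where b': "b' \<in> S z - {b z}" "e b' = e (b z)"
      using coll by (auto simp: bin_collision_def)
    have "of_bool (e b' = e (b z)) \<le> (\<Sum>b'\<in>S z - {b z}. of_bool (e b' = e (b z)) :: real)"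
      using assms(3)[OF z] b'(1) by (intro member_le_sum) auto
    then have "1 \<le> (\<Sum>b'\<in>S z - {b z}. of_bool (e b' = e (b z)) :: real)"
      using b'(2) by simp
    from mult_left_mono[OF this assms(2)[OF z]] show ?thesis
      by simp
  qed
  then have "(\<Sum>z\<in>{z\<in>Z. bin_collision (S z) e (b z)}. Q z)
      \<le> (\<Sum>z\<in>{z\<in>Z. bin_collision (S z) e (b z)}. Q z * (\<Sum>b'\<in>S z - {b z}. of_bool (e b' = e (b z))))"
    by (intro sum_mono) auto
  also have "\<dots> \<le> (\<Sum>z\<in>Z. Q z * (\<Sum>b'\<in>S z - {b z}. of_bool (e b' = e (b z))))"
    by (rule sum_mono2) (auto simp: assms(1,2) sum_nonneg)
  finally show ?thesis .
qed

text \<open>A uniformly random map \<open>A \<rightarrow> B\<close> sends a fixed \<open>b' \<noteq> b\<close> into the bin of \<open>b\<close> with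
  probability \<open>1/|B|\<close>; a union bound over the candidate set gives the collision probability, and
  some map does at least as well as the average.\<close>

lemma random_binning:
  fixes Q :: "'z \<Rightarrow> real" and b :: "'z \<Rightarrow> 'a" and S :: "'z \<Rightarrow> 'a set" and B :: "'c set"
    and M :: real
  assumes Z: "finite Z" and Q: "\<And>z. z \<in> Z \<Longrightarrow> 0 \<le> Q z" "(\<Sum>z\<in>Z. Q z) \<le> 1"
    and A: "finite A" "\<And>z. z \<in> Z \<Longrightarrow> b z \<in> A" "\<And>z. z \<in> Z \<Longrightarrow> S z \<subseteq> A"
    and M: "\<And>z. z \<in> Z \<Longrightarrow> real (card (S z)) \<le> M" "0 \<le> M"
    and B: "finite B" "B \<noteq> {}"
  shows "\<exists>e\<in>PiE A (\<lambda>_. B). (\<Sum>z\<in>{z\<in>Z. bin_collision (S z) e (b z)}. Q z) \<le> M / card B"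
proof -
  define F where "F = PiE A (\<lambda>_. B)"
  define cnt where "cnt (e :: 'a \<Rightarrow> 'c) z = (\<Sum>b'\<in>S z - {b z}. of_bool (e b' = e (b z)) :: real)" for e z
  have fin_S: "finite (S z)" if "z \<in> Z" for z
    using A that finite_subset by blast
  have average: "(\<Sum>e\<in>F. \<Sum>z\<in>Z. Q z * cnt e z) \<le> card F * (M / card B)"
  proof -
    have "(\<Sum>e\<in>F. \<Sum>z\<in>Z. Q z * cnt e z) = (\<Sum>z\<in>Z. Q z * (\<Sum>b'\<in>S z - {b z}. \<Sum>e\<in>F. of_bool (e b' = e (b z))))"
      unfolding cnt_def by (subst sum.swap) (simp add: sum_distrib_left sum.swap[of _ F])
    also have "\<dots> = (\<Sum>z\<in>Z. Q z * (card (S z - {b z}) * (card F / card B)))"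
    proof (rule sum.cong[OF refl])
      fix z assume z: "z \<in> Z"
      have "(\<Sum>e\<in>F. of_bool (e b' = e (b z))) = card F / card B" if "b' \<in> S z - {b z}" for b'
        unfolding F_def using that z A B by (intro sum_PiE_collision) auto
      then show "Q z * (\<Sum>b'\<in>S z - {b z}. \<Sum>e\<in>F. of_bool (e b' = e (b z)))
          = Q z * (card (S z - {b z}) * (card F / card B))"
        by simp
    qed
    also have "\<dots> \<le> (\<Sum>z\<in>Z. Q z * (M * (card F / card B)))"
    proof (intro sum_mono mult_left_mono mult_right_mono)
      fix z assume "z \<in> Z"
      then show "real (card (S z - {b z})) \<le> M"
        using M(1) card_Diff1_le[of "S z" "b z"] by (meson of_nat_le_iff order_trans)
    qed (auto simp: Q(1))
    also have "\<dots> = (\<Sum>z\<in>Z. Q z) * (M * (card F / card B))"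
      by (rule sum_distrib_right[symmetric])
    also have "\<dots> \<le> card F * (M / card B)"
      using mult_right_mono[OF Q(2), of "M * (card F / card B)"] M(2) by (simp add: mult.commute)
    finally show ?thesis .
  qed
  have "F \<noteq> {}" "finite F"
    using A B by (auto simp: F_def PiE_eq_empty_iff finite_PiE)
  then obtain e where "e \<in> F" "(\<Sum>z\<in>Z. Q z * cnt e z) \<le> M / card B"
    using exists_le_average[OF _ _ average] by blast
  then show ?thesis
    using collision_mass_le_count[OF Z Q(1) fin_S, where e = e and b = b]
    unfolding F_def cnt_def by (meson order_trans)
qed

definition bin_decode :: "'b set \<Rightarrow> ('b \<Rightarrow> 'c) \<Rightarrow> 'c \<Rightarrow> 'b" where
  "bin_decode S e c = (SOME b. b \<in> S \<and> e b = c)"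

lemma bin_decode_eq:
  assumes "b \<in> S" "\<not> bin_collision S e b"
  shows "bin_decode S e (e b) = b"
  unfolding bin_decode_def
  by (rule some_equality) (use assms in \<open>auto simp: bin_collision_def\<close>)

definition bin_protocol ::
  "nat \<Rightarrow> ('x list \<Rightarrow> bool list) \<Rightarrow> nat \<Rightarrow> ('y list \<Rightarrow> bool list) \<Rightarrow> ('x, 'y) protocol" where
  "bin_protocol k1 e1 k2 e2 = send_bits1 k1 (\<lambda>a. e1 (fst a)) (send_bits2 k2 (\<lambda>b. e2 (fst b)) Leaf)"

lemma depth_bin_protocol: "depth (bin_protocol k1 e1 k2 e2) = k1 + k2"
  by (simp add: bin_protocol_def depth_send_bits1 depth_send_bits2)

lemma exchange_succeeds_bin_protocol:
  assumes "length (e1 (map fst zs)) = k1" "length (e2 (map snd zs)) = k2"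
    and "map fst zs \<in> S1 (map snd zs)" "\<not> bin_collision (S1 (map snd zs)) e1 (map fst zs)"
    and "map snd zs \<in> S2 (map fst zs)" "\<not> bin_collision (S2 (map fst zs)) e2 (map snd zs)"
  shows "exchange_succeeds (bin_protocol k1 e1 k2 e2)
           (\<lambda>xs tr _ _. bin_decode (S2 xs) e2 (drop k1 tr))
           (\<lambda>ys tr _ _. bin_decode (S1 ys) e1 (take k1 tr)) ux uy u zs"
  using assms
  by (simp add: exchange_succeeds_def bin_protocol_def transcript_send_bits1 transcript_send_bits2
      bin_decode_eq)

definition cand_X :: "('x \<times> 'y) pmf \<Rightarrow> real \<Rightarrow> 'y list \<Rightarrow> 'x list set" where
  "cand_X P c ys = {xs \<in> lists_len (length ys).
     c \<le> prod_list (map (\<lambda>z. pmf P z / marg_Y P (snd z)) (zip xs ys))}"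

definition cand_Y :: "('x \<times> 'y) pmf \<Rightarrow> real \<Rightarrow> 'x list \<Rightarrow> 'y list set" where
  "cand_Y P c xs = {ys \<in> lists_len (length xs).
     c \<le> prod_list (map (\<lambda>z. pmf P z / marg_X P (fst z)) (zip xs ys))}"

lemma card_superlevel_le:
  fixes w :: "'a \<Rightarrow> real"
  assumes "finite S" "\<And>s. s \<in> S \<Longrightarrow> 0 \<le> w s" "(\<Sum>s\<in>S. w s) \<le> 1" "c > 0"
  shows "real (card {s\<in>S. c \<le> w s}) \<le> 1 / c"
proof -
  have "real (card {s\<in>S. c \<le> w s}) * c = (\<Sum>s\<in>{s\<in>S. c \<le> w s}. c)"
    by simp
  also have "\<dots> \<le> (\<Sum>s\<in>{s\<in>S. c \<le> w s}. w s)"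
    by (rule sum_mono) auto
  also have "\<dots> \<le> (\<Sum>s\<in>S. w s)"
    by (rule sum_mono2) (use assms in auto)
  finally show ?thesis
    using assms by (simp add: field_simps)
qed

lemma sum_ratio_marg_le_1:
  fixes P :: "('x::finite \<times> 'y::finite) pmf"
  shows "(\<Sum>x\<in>UNIV. pmf P (x, y) / marg_Y P y) \<le> 1"
    and "(\<Sum>y\<in>UNIV. pmf P (x, y) / marg_X P x) \<le> 1"
  by (simp_all add: marg_X_def marg_Y_def flip: sum_divide_distrib)

lemma card_cand_X_le:
  fixes P :: "('x::finite \<times> 'y::finite) pmf"
  assumes "c > 0"
  shows "real (card (cand_X P c ys)) \<le> 1 / c"
  unfolding cand_X_def
proof (rule card_superlevel_le[OF finite_lists_len _ _ assms])
  show "(\<Sum>xs\<in>lists_len (length ys). prod_list (map (\<lambda>z. pmf P z / marg_Y P (snd z)) (zip xs ys))) \<le> 1"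
    unfolding sum_prod_list_zip_left
    by (intro prod_list_le_1) (auto simp: sum_ratio_marg_le_1 sum_nonneg marg_Y_nonneg)
qed (auto intro!: prod_list_nonneg simp: marg_Y_nonneg)

lemma card_cand_Y_le:
  fixes P :: "('x::finite \<times> 'y::finite) pmf"
  assumes "c > 0"
  shows "real (card (cand_Y P c xs)) \<le> 1 / c"
  unfolding cand_Y_def
proof (rule card_superlevel_le[OF finite_lists_len _ _ assms])
  show "(\<Sum>ys\<in>lists_len (length xs). prod_list (map (\<lambda>z. pmf P z / marg_X P (fst z)) (zip xs ys))) \<le> 1"
    unfolding sum_prod_list_zip_right
    by (intro prod_list_le_1) (auto simp: sum_ratio_marg_le_1 sum_nonneg marg_X_nonneg)
qed (auto intro!: prod_list_nonneg simp: marg_X_nonneg)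

lemma typical_in_cand_X:
  fixes P :: "('x::finite \<times> 'y::finite) pmf"
  assumes "zs \<in> typical P \<delta> n"
  shows "map fst zs \<in> cand_X P (2 powr (- (real n * (cond_entropy_XY P + \<delta>)))) (map snd zs)"
proof -
  have "sum_list (map (info_X_given_Y P) zs) \<le> real n * (cond_entropy_XY P + \<delta>)"
    using assms by (auto simp: typical_def abs_less_iff algebra_simps)
  from powr_le_prod_list_ratio[OF typical_pos(2)[OF assms] this] show ?thesis
    using assms by (simp add: typical_def cand_X_def lists_len_def zip_map_fst_snd)
qed

lemma typical_in_cand_Y:
  fixes P :: "('x::finite \<times> 'y::finite) pmf"
  assumes "zs \<in> typical P \<delta> n"
  shows "map snd zs \<in> cand_Y P (2 powr (- (real n * (cond_entropy_YX P + \<delta>)))) (map fst zs)"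
proof -
  have "sum_list (map (info_Y_given_X P) zs) \<le> real n * (cond_entropy_YX P + \<delta>)"
    using assms by (auto simp: typical_def abs_less_iff algebra_simps)
  from powr_le_prod_list_ratio[OF typical_pos(1)[OF assms] this] show ?thesis
    using assms by (simp add: typical_def cand_Y_def lists_len_def zip_map_fst_snd)
qed

lemma binning_rate:
  assumes "real n * (H + 2 * \<delta>) \<le> real k"
  shows "(1 / 2 powr (- (real n * (H + \<delta>)))) / 2 ^ k \<le> 2 powr (- (real n * \<delta>))"
proof -
  have "(1 / 2 powr (- (real n * (H + \<delta>)))) / 2 ^ k = 2 powr (real n * (H + \<delta>) - real k)"
    by (simp add: powr_minus_divide powr_diff powr_realpow[symmetric])
  also have "\<dots> \<le> 2 powr (- (real n * \<delta>))"
    using assms by (simp add: algebra_simps)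
  finally show ?thesis .
qed

lemma typical_binning_X:
  fixes P :: "('x::finite \<times> 'y::finite) pmf"
  assumes "real n * (cond_entropy_XY P + 2 * \<delta>) \<le> real k"
  obtains e :: "'x list \<Rightarrow> bool list" where "e \<in> PiE (lists_len n) (\<lambda>_. lists_len k)"
    "(\<Sum>zs\<in>{zs \<in> typical P \<delta> n.
        bin_collision (cand_X P (2 powr (- (real n * (cond_entropy_XY P + \<delta>)))) (map snd zs)) e (map fst zs)}.
      list_prob P zs) \<le> 2 powr (- (real n * \<delta>))"
proof -
  define c where "c = 2 powr (- (real n * (cond_entropy_XY P + \<delta>)))"
  have "\<exists>e\<in>PiE (lists_len n) (\<lambda>_. lists_len k :: bool list set).
      (\<Sum>zs\<in>{zs \<in> typical P \<delta> n. bin_collision (cand_X P c (map snd zs)) e (map fst zs)}. list_prob P zs)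
      \<le> (1 / c) / card (lists_len k :: bool list set)"
  proof (rule random_binning)
    show "map fst zs \<in> lists_len n" "cand_X P c (map snd zs) \<subseteq> lists_len n"
      if "zs \<in> typical P \<delta> n" for zs
      using that typical_subset_lists_len by (auto simp: cand_X_def lists_len_def)
    show "real (card (cand_X P c (map snd zs))) \<le> 1 / c" for zs
      by (rule card_cand_X_le) (simp add: c_def)
    show "lists_len k \<noteq> ({} :: bool list set)"
      using lists_len_def by (metis empty_iff length_replicate mem_Collect_eq)
  qed (auto simp: c_def list_prob_nonneg sum_typical_le_1)
  then obtain e where "e \<in> PiE (lists_len n) (\<lambda>_. lists_len k :: bool list set)"
    "(\<Sum>zs\<in>{zs \<in> typical P \<delta> n. bin_collision (cand_X P c (map snd zs)) e (map fst zs)}. list_prob P zs)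
      \<le> (1 / c) / 2 ^ k"
    unfolding card_bool_lists_len of_nat_power of_nat_numeral by blast
  with binning_rate[OF assms] show ?thesis
    by (intro that[of e]) (auto simp: c_def)
qed

lemma typical_binning_Y:
  fixes P :: "('x::finite \<times> 'y::finite) pmf"
  assumes "real n * (cond_entropy_YX P + 2 * \<delta>) \<le> real k"
  obtains e :: "'y list \<Rightarrow> bool list" where "e \<in> PiE (lists_len n) (\<lambda>_. lists_len k)"
    "(\<Sum>zs\<in>{zs \<in> typical P \<delta> n.
        bin_collision (cand_Y P (2 powr (- (real n * (cond_entropy_YX P + \<delta>)))) (map fst zs)) e (map snd zs)}.
      list_prob P zs) \<le> 2 powr (- (real n * \<delta>))"
proof -
  define c where "c = 2 powr (- (real n * (cond_entropy_YX P + \<delta>)))"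
  have "\<exists>e\<in>PiE (lists_len n) (\<lambda>_. lists_len k :: bool list set).
      (\<Sum>zs\<in>{zs \<in> typical P \<delta> n. bin_collision (cand_Y P c (map fst zs)) e (map snd zs)}. list_prob P zs)
      \<le> (1 / c) / card (lists_len k :: bool list set)"
  proof (rule random_binning)
    show "map snd zs \<in> lists_len n" "cand_Y P c (map fst zs) \<subseteq> lists_len n"
      if "zs \<in> typical P \<delta> n" for zs
      using that typical_subset_lists_len by (auto simp: cand_Y_def lists_len_def)
    show "real (card (cand_Y P c (map fst zs))) \<le> 1 / c" for zs
      by (rule card_cand_Y_le) (simp add: c_def)
    show "lists_len k \<noteq> ({} :: bool list set)"
      using lists_len_def by (metis empty_iff length_replicate mem_Collect_eq)
  qed (auto simp: c_def list_prob_nonneg sum_typical_le_1)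
  then obtain e where "e \<in> PiE (lists_len n) (\<lambda>_. lists_len k :: bool list set)"
    "(\<Sum>zs\<in>{zs \<in> typical P \<delta> n. bin_collision (cand_Y P c (map fst zs)) e (map snd zs)}. list_prob P zs)
      \<le> (1 / c) / 2 ^ k"
    unfolding card_bool_lists_len of_nat_power of_nat_numeral by blast
  with binning_rate[OF assms] show ?thesis
    by (intro that[of e]) (auto simp: c_def)
qed

lemma real_nat_ceiling_le: "0 \<le> x \<Longrightarrow> real (nat \<lceil>x\<rceil>) \<le> x + 1"
  by linarith

lemma sum_le_sum_filter_split:
  fixes f :: "'a \<Rightarrow> real"
  assumes "finite A" "\<And>x. x \<in> A \<Longrightarrow> 0 \<le> f x"
  shows "(\<Sum>x\<in>A. f x)
       \<le> (\<Sum>x\<in>{x\<in>A. \<not> R x \<and> \<not> S x}. f x) + (\<Sum>x\<in>{x\<in>A. R x}. f x) + (\<Sum>x\<in>{x\<in>A. S x}. f x)"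
proof -
  have "(\<Sum>x\<in>A. f x)
      \<le> (\<Sum>x\<in>A. f x * of_bool (\<not> R x \<and> \<not> S x) + f x * of_bool (R x) + f x * of_bool (S x))"
    using assms(2) by (intro sum_mono) auto
  also have "\<dots> = (\<Sum>x\<in>{x\<in>A. \<not> R x \<and> \<not> S x}. f x) + (\<Sum>x\<in>{x\<in>A. R x}. f x) + (\<Sum>x\<in>{x\<in>A. S x}. f x)"
    by (simp add: sum.distrib sum_mult_of_bool_eq assms(1) Collect_conj_eq)
  finally show ?thesis .
qed

lemma success_prob_bin_protocol_ge:
  fixes P :: "('x::finite \<times> 'y::finite) pmf"
    and e1 :: "'x list \<Rightarrow> bool list" and e2 :: "'y list \<Rightarrow> bool list"
  assumes e1: "e1 \<in> PiE (lists_len n) (\<lambda>_. lists_len k1)" and e2: "e2 \<in> PiE (lists_len n) (\<lambda>_. lists_len k2)"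
    and G: "G \<subseteq> lists_len n"
    and cand: "\<And>zs. zs \<in> G \<Longrightarrow> map fst zs \<in> S1 (map snd zs) \<and> map snd zs \<in> S2 (map fst zs)"
  shows "(\<Sum>zs\<in>{zs \<in> G. \<not> bin_collision (S1 (map snd zs)) e1 (map fst zs)
                       \<and> \<not> bin_collision (S2 (map fst zs)) e2 (map snd zs)}. list_prob P zs)
     \<le> success_prob P n (return_pmf 0) (return_pmf 0) (return_pmf 0) (bin_protocol k1 e1 k2 e2)
          (\<lambda>xs tr _ _. bin_decode (S2 xs) e2 (drop k1 tr)) (\<lambda>ys tr _ _. bin_decode (S1 ys) e1 (take k1 tr))"
  unfolding success_prob_return prob_iid_pmf
proof (intro sum_mono2 subsetI IntI CollectI)
  fix zs
  assume zs: "zs \<in> {zs \<in> G. \<not> bin_collision (S1 (map snd zs)) e1 (map fst zs)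
                            \<and> \<not> bin_collision (S2 (map fst zs)) e2 (map snd zs)}"
  then show "zs \<in> lists_len n"
    using G by auto
  then have "map fst zs \<in> lists_len n" "map snd zs \<in> lists_len n"
    by (simp_all add: lists_len_def)
  then show "exchange_succeeds (bin_protocol k1 e1 k2 e2) (\<lambda>xs tr _ _. bin_decode (S2 xs) e2 (drop k1 tr))
      (\<lambda>ys tr _ _. bin_decode (S1 ys) e1 (take k1 tr)) 0 0 0 zs"
    using zs cand PiE_mem[OF e1] PiE_mem[OF e2]
    by (intro exchange_succeeds_bin_protocol) (auto simp: lists_len_def)
qed (auto simp: list_prob_nonneg)

lemma achievability:
  fixes P :: "('x::finite \<times> 'y::finite) pmf"
  assumes n: "n > 0" and \<delta>: "\<delta> > 0"
  obtains T dec1 dec2 where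
    "real (depth T) \<le> real n * (cond_entropy_XY P + cond_entropy_YX P + 4 * \<delta>) + 2"
    "1 - info_variance P / (real n * \<delta>\<^sup>2) - 2 * 2 powr (- (real n * \<delta>))
       \<le> success_prob P n (return_pmf 0) (return_pmf 0) (return_pmf 0) T dec1 dec2"
proof -
  define k1 where "k1 = nat \<lceil>real n * (cond_entropy_XY P + 2 * \<delta>)\<rceil>"
  define k2 where "k2 = nat \<lceil>real n * (cond_entropy_YX P + 2 * \<delta>)\<rceil>"
  define S1 where "S1 = cand_X P (2 powr (- (real n * (cond_entropy_XY P + \<delta>))))"
  define S2 where "S2 = cand_Y P (2 powr (- (real n * (cond_entropy_YX P + \<delta>))))"
  have k1: "real n * (cond_entropy_XY P + 2 * \<delta>) \<le> real k1"
    unfolding k1_def by (rule real_nat_ceiling_ge)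
  have k2: "real n * (cond_entropy_YX P + 2 * \<delta>) \<le> real k2"
    unfolding k2_def by (rule real_nat_ceiling_ge)
  obtain e1 :: "'x list \<Rightarrow> bool list" where e1: "e1 \<in> PiE (lists_len n) (\<lambda>_. lists_len k1)"
    and C1: "(\<Sum>zs\<in>{zs \<in> typical P \<delta> n. bin_collision (S1 (map snd zs)) e1 (map fst zs)}.
                list_prob P zs) \<le> 2 powr (- (real n * \<delta>))"
    unfolding S1_def by (rule typical_binning_X[OF k1])
  obtain e2 :: "'y list \<Rightarrow> bool list" where e2: "e2 \<in> PiE (lists_len n) (\<lambda>_. lists_len k2)"
    and C2: "(\<Sum>zs\<in>{zs \<in> typical P \<delta> n. bin_collision (S2 (map fst zs)) e2 (map snd zs)}.
                list_prob P zs) \<le> 2 powr (- (real n * \<delta>))"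
    unfolding S2_def by (rule typical_binning_Y[OF k2])
  have cand: "map fst zs \<in> S1 (map snd zs) \<and> map snd zs \<in> S2 (map fst zs)" if "zs \<in> typical P \<delta> n" for zs
    unfolding S1_def S2_def using typical_in_cand_X[OF that] typical_in_cand_Y[OF that] by blast
  have "1 - info_variance P / (real n * \<delta>\<^sup>2) \<le> (\<Sum>zs\<in>typical P \<delta> n. list_prob P zs)"
    using prob_atypical_le[OF n \<delta>, of P] sum_list_prob[where p = P and n = n]
      sum.subset_diff[OF typical_subset_lists_len[of P \<delta> n] finite_lists_len, where g = "list_prob P"]
    by linarith
  also have "\<dots> \<le> (\<Sum>zs\<in>{zs \<in> typical P \<delta> n. \<not> bin_collision (S1 (map snd zs)) e1 (map fst zs)
                              \<and> \<not> bin_collision (S2 (map fst zs)) e2 (map snd zs)}. list_prob P zs)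
      + 2 * 2 powr (- (real n * \<delta>))"
    using sum_le_sum_filter_split[where f = "list_prob P"
        and R = "\<lambda>zs. bin_collision (S1 (map snd zs)) e1 (map fst zs)"
        and S = "\<lambda>zs. bin_collision (S2 (map fst zs)) e2 (map snd zs)",
        OF finite_typical[of P \<delta> n] list_prob_nonneg] C1 C2
    by linarith
  also have "\<dots> \<le> success_prob P n (return_pmf 0) (return_pmf 0) (return_pmf 0) (bin_protocol k1 e1 k2 e2)
          (\<lambda>xs tr _ _. bin_decode (S2 xs) e2 (drop k1 tr)) (\<lambda>ys tr _ _. bin_decode (S1 ys) e1 (take k1 tr))
        + 2 * 2 powr (- (real n * \<delta>))"
    by (rule add_right_mono[OF success_prob_bin_protocol_ge[OF e1 e2 typical_subset_lists_len cand]])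
  finally have "1 - info_variance P / (real n * \<delta>\<^sup>2) - 2 * 2 powr (- (real n * \<delta>))
      \<le> success_prob P n (return_pmf 0) (return_pmf 0) (return_pmf 0) (bin_protocol k1 e1 k2 e2)
          (\<lambda>xs tr _ _. bin_decode (S2 xs) e2 (drop k1 tr)) (\<lambda>ys tr _ _. bin_decode (S1 ys) e1 (take k1 tr))"
    by simp
  moreover have "real (depth (bin_protocol k1 e1 k2 e2))
      \<le> real n * (cond_entropy_XY P + cond_entropy_YX P + 4 * \<delta>) + 2"
    using real_nat_ceiling_le[of "real n * (cond_entropy_XY P + 2 * \<delta>)"]
      real_nat_ceiling_le[of "real n * (cond_entropy_YX P + 2 * \<delta>)"]
      cond_entropy_XY_nonneg[of P] cond_entropy_YX_nonneg[of P] \<delta>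
    by (simp add: depth_bin_protocol k1_def k2_def algebra_simps)
  ultimately show ?thesis
    using that by blast
qed

lemma L_eps_bounds:
  fixes P :: "('x::finite \<times> 'y::finite) pmf"
  assumes \<epsilon>: "0 < \<epsilon>" "\<epsilon> < 1" and n: "n > 0" and \<delta>: "\<delta> > 0"
    and small: "info_variance P / (real n * \<delta>\<^sup>2) \<le> min ((1 - \<epsilon>) / 2) (\<epsilon> / 2)"
      "2 powr (- (real n * \<delta>)) \<le> \<epsilon> / 4"
  shows "real n * (cond_entropy_XY P + cond_entropy_YX P - 2 * \<delta>) - 1 + log 2 (((1 - \<epsilon>) / 2)\<^sup>2)
           \<le> L_eps P \<epsilon> n"
    and "L_eps P \<epsilon> n \<le> real n * (cond_entropy_XY P + cond_entropy_YX P + 4 * \<delta>) + 2"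
proof -
  define D where "D = {depth T | T PUX PUY PU dec1 dec2. 1 - \<epsilon> \<le> success_prob P n PUX PUY PU T dec1 dec2}"
  have L_eps_eq: "L_eps P \<epsilon> n = real (Inf D)"
    by (simp add: L_eps_def D_def)
  obtain T dec1 dec2 where T: "real (depth T) \<le> real n * (cond_entropy_XY P + cond_entropy_YX P + 4 * \<delta>) + 2"
    "1 - info_variance P / (real n * \<delta>\<^sup>2) - 2 * 2 powr (- (real n * \<delta>))
       \<le> success_prob P n (return_pmf 0) (return_pmf 0) (return_pmf 0) T dec1 dec2"
    using achievability[OF n \<delta>] .
  moreover have "info_variance P / (real n * \<delta>\<^sup>2) \<le> \<epsilon> / 2"
    using small(1) by simp
  ultimately have "1 - \<epsilon> \<le> success_prob P n (return_pmf 0) (return_pmf 0) (return_pmf 0) T dec1 dec2"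
    using small(2) by argo
  then have "depth T \<in> D"
    unfolding D_def by blast
  then show "L_eps P \<epsilon> n \<le> real n * (cond_entropy_XY P + cond_entropy_YX P + 4 * \<delta>) + 2"
    using T(1) cInf_lower[of "depth T" D] by (simp add: L_eps_eq)
  text \<open>\<open>Inf {} = 0\<close> on \<open>nat\<close>: the lower bound needs the protocol found above.\<close>
  have "Inf D \<in> D"
    using Inf_nat_def1 \<open>depth T \<in> D\<close> by blast
  then obtain T' PUX PUY PU dec1' dec2' where T': "Inf D = depth T'"
    "1 - \<epsilon> \<le> success_prob P n PUX PUY PU T' dec1' dec2'"
    unfolding D_def by blast
  have "info_variance P / (real n * \<delta>\<^sup>2) \<le> (1 - \<epsilon>) / 2"
    using small(1) by simp
  from depth_lower_bound[OF \<epsilon>(2) n \<delta> this T'(2)] T'(1)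
  show "real n * (cond_entropy_XY P + cond_entropy_YX P - 2 * \<delta>) - 1 + log 2 (((1 - \<epsilon>) / 2)\<^sup>2)
      \<le> L_eps P \<epsilon> n"
    by (simp add: L_eps_eq)
qed

lemma L_eps_eventually_close:
  fixes P :: "('x::finite \<times> 'y::finite) pmf"
  assumes \<epsilon>: "0 < \<epsilon>" "\<epsilon> < 1" and r: "r > 0"
  shows "\<forall>\<^sub>F n in sequentially. \<bar>L_eps P \<epsilon> n / real n - (cond_entropy_XY P + cond_entropy_YX P)\<bar> < r"
proof -
  define H where "H = cond_entropy_XY P + cond_entropy_YX P"
  define \<delta> where "\<delta> = r / 8"
  define K where "K = 1 - log 2 (((1 - \<epsilon>) / 2)\<^sup>2)"
  have \<delta>: "\<delta> > 0"
    using r by (simp add: \<delta>_def)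
  have over_n: "\<forall>\<^sub>F n in sequentially. c / real n < t" if "t > 0" for c t :: real
    using that by (intro order_tendstoD(2)[of _ 0]) (real_asymp, simp)
  have "\<forall>\<^sub>F n in sequentially. 2 powr (- (real n * \<delta>)) < \<epsilon> / 4"
    using \<epsilon> \<delta> by (intro order_tendstoD(2)[of _ 0]) (real_asymp, simp)
  moreover have "\<forall>\<^sub>F n in sequentially. info_variance P / \<delta>\<^sup>2 / real n < min ((1 - \<epsilon>) / 2) (\<epsilon> / 2)"
    using \<epsilon> by (intro over_n) simp
  moreover have "\<forall>\<^sub>F n in sequentially. 2 / real n < r / 2" "\<forall>\<^sub>F n in sequentially. \<bar>K\<bar> / real n < r / 2"
    using r by (auto intro: over_n)
  moreover have "\<forall>\<^sub>F n in sequentially. n > 0"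
    by (rule eventually_gt_at_top)
  ultimately show ?thesis
  proof eventually_elim
    case (elim n)
    then have n: "real n > 0"
      by simp
    have lower: "real n * (H - 2 * \<delta>) - K \<le> L_eps P \<epsilon> n"
      and upper: "L_eps P \<epsilon> n \<le> real n * (H + 4 * \<delta>) + 2"
      using L_eps_bounds[OF \<epsilon> _ \<delta>, of n P] elim by (simp_all add: H_def K_def algebra_simps)
    have "H - 2 * \<delta> - K / real n = (real n * (H - 2 * \<delta>) - K) / real n"
      using n by (simp add: field_simps)
    also have "\<dots> \<le> L_eps P \<epsilon> n / real n"
      using lower n by (simp add: divide_right_mono)
    finally have "H - 2 * \<delta> - K / real n \<le> L_eps P \<epsilon> n / real n" .
    moreover have "L_eps P \<epsilon> n / real n \<le> (real n * (H + 4 * \<delta>) + 2) / real n"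
      using upper n by (simp add: divide_right_mono)
    then have "L_eps P \<epsilon> n / real n \<le> H + 4 * \<delta> + 2 / real n"
      using n by (simp add: field_simps)
    moreover have "K / real n \<le> \<bar>K\<bar> / real n"
      using n by (simp add: divide_right_mono)
    ultimately show ?case
      using elim r unfolding H_def \<delta>_def by (simp add: abs_less_iff)
  qed
qed

theorem mainTheorem8:
  fixes P :: "('x::finite \<times> 'y::finite) pmf" and \<epsilon> :: real
  assumes "0 < \<epsilon>" and "\<epsilon> < 1"
  shows "(\<lambda>n. L_eps P \<epsilon> n / real n) \<longlonglongrightarrow> cond_entropy_XY P + cond_entropy_YX P"
proof (rule tendstoI)
  fix r :: real assume "0 < r"
  then show "\<forall>\<^sub>F n in sequentially. dist (L_eps P \<epsilon> n / real n) (cond_entropy_XY P + cond_entropy_YX P) < r"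
    using L_eps_eventually_close[OF assms] by (simp add: dist_real_def)
qed

end
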